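(* Let $X$ be a distance-regular graph of diameter $d\geq 2$ on $n$ vertices with degree $k$, $\lambda=a_1$, $\mu=c_2$, and put $r=(n-1)/k$. Then $$\min(\lambda,\mu)<k\left(1+\min\left(\frac{r-1}{d-1},\left(\frac{r}{d}\right)^{\frac{1}{d-1}}\right)\right)^{-1}\quad\text{and}\quad \mu<k\max\left(\frac{d-1}{r-1},\left(\frac{d}{r}\right)^{\frac{1}{d-1}}\right).$$
   Context: A connected graph $X$ of diameter $d$ is distance-regular if there are integers $a_i,b_i,c_i$ ($0\le i\le d$) such that for all vertices $v,w$ with $\mathrm{dist}(v,w)=i$, $w$ has exactly $c_i$ neighbours at distance $i-1$, $a_i$ at distance $i$, $b_i$ at distance $i+1$ from $v$; $X$ is $k$-regular with $k=b_0$; $\lambda=a_1$, $\mu=c_2$. *)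

theory Defs
  imports Complex_Main
begin

definition adj_rel :: "'a set \<Rightarrow> ('a \<Rightarrow> 'a \<Rightarrow> bool) \<Rightarrow> ('a \<times> 'a) set" where
  "adj_rel V E = {(x, y). x \<in> V \<and> y \<in> V \<and> E x y}"

definition gdist :: "'a set \<Rightarrow> ('a \<Rightarrow> 'a \<Rightarrow> bool) \<Rightarrow> 'a \<Rightarrow> 'a \<Rightarrow> nat" where
  "gdist V E v w = (LEAST m. (v, w) \<in> (adj_rel V E) ^^ m)"

definition simple_graph :: "'a set \<Rightarrow> ('a \<Rightarrow> 'a \<Rightarrow> bool) \<Rightarrow> bool" where
  "simple_graph V E \<longleftrightarrow> finite V \<and> V \<noteq> {} \<and>
     (\<forall>x\<in>V. \<forall>y\<in>V. E x y \<longleftrightarrow> E y x) \<and> (\<forall>x\<in>V. \<not> E x x)"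

definition connected_graph :: "'a set \<Rightarrow> ('a \<Rightarrow> 'a \<Rightarrow> bool) \<Rightarrow> bool" where
  "connected_graph V E \<longleftrightarrow> (\<forall>v\<in>V. \<forall>w\<in>V. \<exists>m. (v, w) \<in> (adj_rel V E) ^^ m)"

definition diameter :: "'a set \<Rightarrow> ('a \<Rightarrow> 'a \<Rightarrow> bool) \<Rightarrow> nat" where
  "diameter V E = Max {gdist V E v w | v w. v \<in> V \<and> w \<in> V}"

definition distance_regular ::
  "'a set \<Rightarrow> ('a \<Rightarrow> 'a \<Rightarrow> bool) \<Rightarrow> (nat \<Rightarrow> nat) \<Rightarrow> (nat \<Rightarrow> nat) \<Rightarrow> (nat \<Rightarrow> nat) \<Rightarrow> bool" where
  "distance_regular V E a b c \<longleftrightarrow> simple_graph V E \<and> connected_graph V E \<and>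
     (\<forall>v\<in>V. \<forall>w\<in>V.
        card {u \<in> V. E w u \<and> gdist V E v u + 1 = gdist V E v w} = c (gdist V E v w) \<and>
        card {u \<in> V. E w u \<and> gdist V E v u = gdist V E v w} = a (gdist V E v w) \<and>
        card {u \<in> V. E w u \<and> gdist V E v u = gdist V E v w + 1} = b (gdist V E v w))"

end

theory Submission
  imports Defs
begin

(* Fix a vertex v and let k(i) be the number of vertices at distance i from v. Counting the
   edges between consecutive distance layers gives k(i+1) c(i+1) = k(i) b(i); since c(i) >= mu for
   i >= 2 and b(i) <= b(1) for i >= 1, this yields k(i+1) <= k q^i with q = b(1)/mu, hence
   r <= 1 + q + ... + q^(d-1). On the other hand s = min ((r-1)/(d-1)) ((r/d)^(1/(d-1))) satisfies
   1 + s + ... + s^(d-1) <= r: bound every power by s if s <= 1 and by s^(d-1) otherwise.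
   So s <= b(1)/mu, and both inequalities follow from b(1) + lambda < k. *)

section \<open>Graph distance\<close>

lemma adj_rel_relpow_in_V: "(v, x) \<in> adj_rel V E ^^ m \<Longrightarrow> v \<in> V \<Longrightarrow> x \<in> V"
  by (cases m) (auto simp: adj_rel_def elim: relpow_Suc_E)

lemma gdist_le_walk: "(v, w) \<in> adj_rel V E ^^ m \<Longrightarrow> gdist V E v w \<le> m"
  unfolding gdist_def by (rule Least_le)

lemma walk_gdist:
  "connected_graph V E \<Longrightarrow> v \<in> V \<Longrightarrow> w \<in> V \<Longrightarrow> (v, w) \<in> adj_rel V E ^^ gdist V E v w"
  unfolding gdist_def connected_graph_def by (meson LeastI_ex)

lemma gdist_self [simp]: "gdist V E v v = 0"
  using gdist_le_walk[where m = 0] by fastforce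

lemma gdist_eq_0:
  "connected_graph V E \<Longrightarrow> v \<in> V \<Longrightarrow> w \<in> V \<Longrightarrow> gdist V E v w = 0 \<Longrightarrow> v = w"
  using walk_gdist[of V E v w] by simp

lemma gdist_eq_1_imp_adj:
  "connected_graph V E \<Longrightarrow> v \<in> V \<Longrightarrow> w \<in> V \<Longrightarrow> gdist V E v w = 1 \<Longrightarrow> E v w"
  using walk_gdist[of V E v w] by (simp add: adj_rel_def)

lemma gdist_adj:
  assumes "simple_graph V E" "connected_graph V E" "v \<in> V" "w \<in> V" "E v w"
  shows "gdist V E v w = 1"
proof -
  have "gdist V E v w \<le> 1"
    by (rule gdist_le_walk) (use assms(3-5) in \<open>simp add: adj_rel_def\<close>)
  moreover have "v \<noteq> w"
    using assms(1,3,5) unfolding simple_graph_def by blast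
  ultimately show ?thesis
    using gdist_eq_0[OF assms(2-4)] by linarith
qed

lemma gdist_triangle:
  assumes "connected_graph V E" "x \<in> V" "y \<in> V" "z \<in> V"
  shows "gdist V E x z \<le> gdist V E x y + gdist V E y z"
proof -
  have "(x, z) \<in> adj_rel V E ^^ (gdist V E x y + gdist V E y z)"
    unfolding relpow_add by (rule relcompI; rule walk_gdist) (use assms in auto)
  then show ?thesis
    by (rule gdist_le_walk)
qed

lemma gdist_split:
  assumes "connected_graph V E" "v \<in> V" "w \<in> V" "m \<le> gdist V E v w"
  obtains x where "x \<in> V" "gdist V E v x = m" "gdist V E x w = gdist V E v w - m"
proof -
  let ?j = "gdist V E v w"
  have "(v, w) \<in> adj_rel V E ^^ (m + (?j - m))"
    using walk_gdist[OF assms(1-3)] assms(4) by simp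
  then obtain x where x: "(v, x) \<in> adj_rel V E ^^ m" "(x, w) \<in> adj_rel V E ^^ (?j - m)"
    unfolding relpow_add by (rule relcompEpair)
  have "x \<in> V"
    using adj_rel_relpow_in_V[OF x(1) assms(2)] .
  moreover have "?j \<le> gdist V E v x + gdist V E x w"
    using gdist_triangle[OF assms(1,2) \<open>x \<in> V\<close> assms(3)] .
  moreover have "gdist V E v x \<le> m" "gdist V E x w \<le> ?j - m"
    using gdist_le_walk[OF x(1)] gdist_le_walk[OF x(2)] .
  ultimately have "gdist V E v x = m" "gdist V E x w = ?j - m"
    using assms(4) by linarith+
  with \<open>x \<in> V\<close> show ?thesis
    by (rule that)
qed

section \<open>Double counting\<close>

lemma double_counting:
  assumes "finite A" "finite B"
    and "\<And>x. x \<in> A \<Longrightarrow> card {y \<in> B. R x y} = p"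
    and "\<And>y. y \<in> B \<Longrightarrow> card {x \<in> A. R x y} = q"
  shows "card A * p = card B * q"
proof -
  have count: "card {x \<in> S. P x} = (\<Sum>x\<in>S. if P x then 1 else 0)" if "finite S" for S and P :: "_ \<Rightarrow> bool"
    using that by (simp add: sum.If_cases Int_def)
  have "card A * p = (\<Sum>x\<in>A. card {y \<in> B. R x y})"
    using assms(3) by simp
  also have "\<dots> = (\<Sum>x\<in>A. \<Sum>y\<in>B. if R x y then 1 else 0)"
    using count[OF assms(2)] by simp
  also have "\<dots> = (\<Sum>y\<in>B. \<Sum>x\<in>A. if R x y then 1 else 0)"
    by (rule sum.swap)
  also have "\<dots> = (\<Sum>y\<in>B. card {x \<in> A. R x y})"
    using count[OF assms(1)] by simp
  also have "\<dots> = card B * q"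
    using assms(4) by simp
  finally show ?thesis .
qed

lemma card_mult_mono: "(S \<noteq> {} \<Longrightarrow> p \<le> q) \<Longrightarrow> card S * p \<le> card S * q"
  by (cases "S = {}") auto

section \<open>Real inequalities\<close>

lemma sum_powers_strict_mono:
  fixes q T :: real
  assumes "0 \<le> q" "q < T" "2 \<le> D"
  shows "(\<Sum>j<D. q ^ j) < (\<Sum>j<D. T ^ j)"
proof (rule sum_strict_mono_ex1)
  show "\<forall>j\<in>{..<D}. q ^ j \<le> T ^ j"
    using assms by (auto intro: power_mono)
  show "\<exists>j\<in>{..<D}. q ^ j < T ^ j"
    using assms by (intro bexI[of _ 1]) auto
qed simp

lemma power_le_of_le_root_powr:
  fixes T x :: real
  assumes "0 \<le> T" "0 < x" "2 \<le> D" "T \<le> x powr (1 / (real D - 1))"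
  shows "T ^ (D - 1) \<le> x"
proof -
  have "T ^ (D - 1) \<le> (x powr (1 / (real D - 1))) ^ (D - 1)"
    using assms by (intro power_mono) auto
  also have "\<dots> = x powr (1 / (real D - 1) * real (D - 1))"
    using assms(2) by (simp add: powr_realpow[symmetric] powr_powr)
  also have "1 / (real D - 1) * real (D - 1) = 1"
    using assms(3) by (simp add: of_nat_diff)
  finally show ?thesis
    using assms(2) by simp
qed

lemma sum_powers_le:
  fixes T r :: real
  assumes "0 \<le> T" "2 \<le> D" "T \<le> (r - 1) / (real D - 1)" "T ^ (D - 1) \<le> r / real D"
  shows "(\<Sum>j<D. T ^ j) \<le> r"
proof -
  obtain D' where D': "D = Suc D'"
    using assms(2) by (cases D) auto
  have linear: "1 + real D' * T \<le> r"
    using assms(2,3) D' by (simp add: field_simps)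
  have split: "(\<Sum>j<D. T ^ j) = 1 + (\<Sum>j<D'. T ^ Suc j)"
    unfolding D' sum.lessThan_Suc_shift by simp
  show ?thesis
  proof (cases "T \<le> 1")
    case True
    have "(\<Sum>j<D'. T ^ Suc j) \<le> (\<Sum>j<D'. T)"
      by (rule sum_mono) (use True assms(1) in \<open>simp add: mult_left_le power_le_one\<close>)
    then show ?thesis
      using split linear by simp
  next
    case False
    have "(\<Sum>j<D'. T ^ Suc j) \<le> (\<Sum>j<D'. T ^ (D - 1))"
      by (rule sum_mono) (use False D' in \<open>auto simp del: power_Suc intro!: power_increasing\<close>)
    also have "\<dots> \<le> real D' * (r / real D)"
      using mult_left_mono[OF assms(4), of "real D'"] by simp
    also have "\<dots> \<le> r - 1"
    proof -
      have "real D' \<le> real D' * T"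
        using False by (simp add: mult_le_cancel_left1)
      then have "real D \<le> r"
        using linear D' by simp
      then show ?thesis
        using D' by (simp add: field_simps)
    qed
    finally show ?thesis
      using split by simp
  qed
qed

lemma min_root_bound_le:
  fixes q r :: real
  assumes "0 \<le> q" "1 < r" "2 \<le> D" "r \<le> (\<Sum>j<D. q ^ j)"
  shows "min ((r - 1) / (real D - 1)) ((r / real D) powr (1 / (real D - 1))) \<le> q"
proof (rule ccontr)
  define s where "s = min ((r - 1) / (real D - 1)) ((r / real D) powr (1 / (real D - 1)))"
  assume "\<not> s \<le> q"
  have s_le: "s \<le> (r - 1) / (real D - 1)" "s \<le> (r / real D) powr (1 / (real D - 1))"
    unfolding s_def by simp_all
  have "0 \<le> s"
    using assms(2,3) by (simp add: s_def)
  moreover have "s ^ (D - 1) \<le> r / real D"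
    using power_le_of_le_root_powr[OF \<open>0 \<le> s\<close> _ assms(3) s_le(2)] assms(2,3) by simp
  ultimately have "(\<Sum>j<D. s ^ j) \<le> r"
    using sum_powers_le[OF _ assms(3) s_le(1)] by blast
  moreover have "(\<Sum>j<D. q ^ j) < (\<Sum>j<D. s ^ j)"
    using \<open>\<not> s \<le> q\<close> assms(1,3) by (intro sum_powers_strict_mono) auto
  ultimately show False
    using assms(4) by simp
qed

lemma max_one_divide_eq:
  fixes x y :: real
  assumes "0 < x" "0 < y"
  shows "max (1 / x) (1 / y) = 1 / min x y"
  using assms by (simp add: max_def min_def flip: inverse_eq_divide)

lemma max_reciprocal_ratios_eq:
  fixes d r e :: real
  assumes "1 < d" "1 < r"
  shows "max ((d - 1) / (r - 1)) ((d / r) powr e) = 1 / min ((r - 1) / (d - 1)) ((r / d) powr e)"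
proof -
  have "(d - 1) / (r - 1) = 1 / ((r - 1) / (d - 1))" and "(d / r) powr e = 1 / (r / d) powr e"
    using assms by (simp_all add: powr_divide)
  then show ?thesis
    using max_one_divide_eq[of "(r - 1) / (d - 1)" "(r / d) powr e"] assms by simp
qed

lemma intersection_number_bounds:
  fixes k lam mu b1 s :: real
  assumes "0 < mu" "0 \<le> lam" "0 \<le> b1" "b1 + lam < k" "0 < s" "s \<le> b1 / mu"
  shows "min lam mu < k / (1 + s)" and "mu < k / s"
proof -
  let ?m = "min lam mu"
  have "?m * s \<le> ?m * (b1 / mu)"
    using assms(1,2,6) by (intro mult_left_mono) auto
  also have "\<dots> \<le> mu * (b1 / mu)"
    using assms(1,3) by (intro mult_right_mono) auto
  finally have "?m * (1 + s) < k"
    using assms(1,4) by (simp add: algebra_simps)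
  then show "?m < k / (1 + s)"
    using assms(5) by (simp add: pos_less_divide_eq)
  have "mu * s < k"
    using mult_left_mono[OF assms(6), of mu] assms(1,2,4) by simp
  then show "mu < k / s"
    using assms(5) by (simp add: pos_less_divide_eq)
qed

section \<open>Distance-regular graphs\<close>

locale distance_regular_graph =
  fixes V :: "'a set" and E :: "'a \<Rightarrow> 'a \<Rightarrow> bool" and a b c :: "nat \<Rightarrow> nat"
  assumes distance_regular: "distance_regular V E a b c"
begin

lemma simple: "simple_graph V E"
  and connected: "connected_graph V E"
  using distance_regular by (simp_all add: distance_regular_def)

lemma finite_V: "finite V"
  and V_nonempty: "V \<noteq> {}"
  and adj_sym: "v \<in> V \<Longrightarrow> w \<in> V \<Longrightarrow> E v w \<longleftrightarrow> E w v"
  and adj_irrefl: "v \<in> V \<Longrightarrow> \<not> E v v"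
  using simple by (simp_all add: simple_graph_def)

lemma c_count: "v \<in> V \<Longrightarrow> w \<in> V \<Longrightarrow>
    card {u \<in> V. E w u \<and> gdist V E v u + 1 = gdist V E v w} = c (gdist V E v w)"
  and a_count: "v \<in> V \<Longrightarrow> w \<in> V \<Longrightarrow>
    card {u \<in> V. E w u \<and> gdist V E v u = gdist V E v w} = a (gdist V E v w)"
  and b_count: "v \<in> V \<Longrightarrow> w \<in> V \<Longrightarrow>
    card {u \<in> V. E w u \<and> gdist V E v u = gdist V E v w + 1} = b (gdist V E v w)"
  using distance_regular by (simp_all add: distance_regular_def)

lemma gdist_adj_iff: "v \<in> V \<Longrightarrow> w \<in> V \<Longrightarrow> gdist V E v w = 1 \<longleftrightarrow> E v w"
  using gdist_adj[OF simple connected] gdist_eq_1_imp_adj[OF connected] by blast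

lemma card_neighbours: "w \<in> V \<Longrightarrow> card {u \<in> V. E w u} = b 0"
  using b_count[of w w] gdist_adj_iff by (simp cong: conj_cong)

lemma finite_distances: "finite {gdist V E v w | v w. v \<in> V \<and> w \<in> V}"
proof -
  have "{gdist V E v w | v w. v \<in> V \<and> w \<in> V} = case_prod (gdist V E) ` (V \<times> V)"
    by auto
  then show ?thesis
    using finite_V by simp
qed

lemma gdist_le_diameter: "v \<in> V \<Longrightarrow> w \<in> V \<Longrightarrow> gdist V E v w \<le> diameter V E"
  unfolding diameter_def by (rule Max_ge[OF finite_distances]) auto

lemma exists_gdist_eq:
  assumes "j \<le> diameter V E"
  obtains v w where "v \<in> V" "w \<in> V" "gdist V E v w = j"
proof -
  have "diameter V E \<in> {gdist V E v w | v w. v \<in> V \<and> w \<in> V}"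
    unfolding diameter_def by (rule Max_in[OF finite_distances]) (use V_nonempty in auto)
  then obtain v w where "v \<in> V" "w \<in> V" "j \<le> gdist V E v w"
    using assms by auto
  with gdist_split[OF connected] that show ?thesis
    by metis
qed

lemma c2_le_c:
  assumes "v \<in> V" "w \<in> V" "2 \<le> gdist V E v w"
  shows "c 2 \<le> c (gdist V E v w)"
proof -
  obtain x where x: "x \<in> V" "gdist V E v x = gdist V E v w - 2" "gdist V E x w = 2"
    using gdist_split[OF connected assms(1,2) diff_le_self] assms(3) by (metis diff_diff_cancel)
  have "{u \<in> V. E w u \<and> gdist V E x u + 1 = gdist V E x w} \<subseteq>
        {u \<in> V. E w u \<and> gdist V E v u + 1 = gdist V E v w}"
  proof safe
    fix u assume u: "u \<in> V" "E w u" "gdist V E x u + 1 = gdist V E x w"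
    have "gdist V E v u \<le> gdist V E v x + gdist V E x u"
      using gdist_triangle[OF connected assms(1) x(1) u(1)] .
    moreover have "gdist V E v w \<le> gdist V E v u + gdist V E u w"
      using gdist_triangle[OF connected assms(1) u(1) assms(2)] .
    moreover have "gdist V E u w = 1"
      using gdist_adj_iff adj_sym u(1,2) assms(2) by blast
    ultimately show "gdist V E v u + 1 = gdist V E v w"
      using x u(3) assms(3) by linarith
  qed
  from card_mono[OF _ this] show ?thesis
    using finite_V c_count[OF x(1) assms(2)] c_count[OF assms(1,2)] x(3)
    by simp
qed

lemma b_le_b1:
  assumes "v \<in> V" "w \<in> V" "1 \<le> gdist V E v w"
  shows "b (gdist V E v w) \<le> b 1"
proof -
  obtain x where x: "x \<in> V" "gdist V E v x = gdist V E v w - 1" "gdist V E x w = 1"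
    using gdist_split[OF connected assms(1,2) diff_le_self] assms(3) by (metis diff_diff_cancel)
  have "{u \<in> V. E w u \<and> gdist V E v u = gdist V E v w + 1} \<subseteq>
        {u \<in> V. E w u \<and> gdist V E x u = gdist V E x w + 1}"
  proof safe
    fix u assume u: "u \<in> V" "E w u" "gdist V E v u = gdist V E v w + 1"
    have "gdist V E v u \<le> gdist V E v x + gdist V E x u"
      using gdist_triangle[OF connected assms(1) x(1) u(1)] .
    moreover have "gdist V E x u \<le> gdist V E x w + gdist V E w u"
      using gdist_triangle[OF connected x(1) assms(2) u(1)] .
    moreover have "gdist V E w u = 1"
      using gdist_adj_iff u(1,2) assms(2) by blast
    ultimately show "gdist V E x u = gdist V E x w + 1"
      using x u(3) assms(3) by linarith
  qed
  from card_mono[OF _ this] show ?thesis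
    using finite_V b_count[OF x(1) assms(2)] b_count[OF assms(1,2)] x(3)
    by simp
qed

lemma geodesic_2:
  assumes "2 \<le> diameter V E"
  obtains v x w where "v \<in> V" "x \<in> V" "w \<in> V" "gdist V E v w = 2" "E v x" "E x w"
proof -
  obtain v w where vw: "v \<in> V" "w \<in> V" "gdist V E v w = 2"
    using exists_gdist_eq[OF assms] .
  moreover obtain x where "x \<in> V" "gdist V E v x = 1" "gdist V E x w = 1"
    using gdist_split[OF connected vw(1,2), of 1] vw(3) by auto
  ultimately show ?thesis
    using that gdist_adj_iff by blast
qed

lemma c2_pos:
  assumes "2 \<le> diameter V E"
  shows "0 < c 2"
proof -
  obtain v x w where h: "v \<in> V" "x \<in> V" "w \<in> V" "gdist V E v w = 2" "E v x" "E x w"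
    using geodesic_2[OF assms] .
  have "x \<in> {u \<in> V. E w u \<and> gdist V E v u + 1 = gdist V E v w}"
    using h gdist_adj_iff adj_sym by auto
  then show ?thesis
    using c_count[OF h(1,3)] h(4) finite_V card_gt_0_iff by fastforce
qed

lemma b1_a1_less_b0:
  assumes "2 \<le> diameter V E"
  shows "b 1 + a 1 < b 0"
proof -
  obtain v x where h: "v \<in> V" "x \<in> V" "gdist V E v x = 1"
    using geodesic_2[OF assms] gdist_adj_iff by metis
  let ?A = "{u \<in> V. E x u \<and> gdist V E v u = gdist V E v x}"
  let ?B = "{u \<in> V. E x u \<and> gdist V E v u = gdist V E v x + 1}"
  have "card (insert v (?A \<union> ?B)) = card ?A + card ?B + 1"
    using finite_V h(3) by (simp add: card_Un_disjoint disjoint_iff)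
  moreover have "card (insert v (?A \<union> ?B)) \<le> card {u \<in> V. E x u}"
    by (rule card_mono) (use finite_V h gdist_adj_iff adj_sym in auto)
  ultimately show ?thesis
    using a_count[OF h(1,2)] b_count[OF h(1,2)] card_neighbours[OF h(2)] h(3) by simp
qed

lemma b0_less_card_V:
  assumes "2 \<le> diameter V E"
  shows "b 0 + 1 < card V"
proof -
  obtain v x w where h: "v \<in> V" "x \<in> V" "w \<in> V" "gdist V E v w = 2" "E v x" "E x w"
    using geodesic_2[OF assms] .
  have "v \<noteq> w" "\<not> E v w" "\<not> E v v"
    using h(4) gdist_adj_iff[OF h(1,3)] adj_irrefl[OF h(1)] by auto
  then have "card (insert v (insert w {u \<in> V. E v u})) = b 0 + 2"
    using card_neighbours[OF h(1)] finite_V by simp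
  moreover have "card (insert v (insert w {u \<in> V. E v u})) \<le> card V"
    by (rule card_mono[OF finite_V]) (use h in auto)
  ultimately show ?thesis
    by simp
qed

definition layer :: "'a \<Rightarrow> nat \<Rightarrow> 'a set" where
  "layer v i = {u \<in> V. gdist V E v u = i}"

lemma finite_layer: "finite (layer v i)"
  using finite_V by (simp add: layer_def)

lemma layer_0: "v \<in> V \<Longrightarrow> layer v 0 = {v}"
  using gdist_eq_0[OF connected] by (auto simp: layer_def)

lemma card_layer_1: "v \<in> V \<Longrightarrow> card (layer v 1) = b 0"
  using card_neighbours gdist_adj_iff by (simp add: layer_def cong: conj_cong)

lemma card_layer_mult_b:
  assumes "v \<in> V"
  shows "card (layer v i) * b i = card (layer v (Suc i)) * c (Suc i)"
proof (rule double_counting[OF finite_layer finite_layer])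
  fix x assume "x \<in> layer v i"
  then have "{y \<in> layer v (Suc i). E x y} = {u \<in> V. E x u \<and> gdist V E v u = gdist V E v x + 1}"
    by (auto simp: layer_def)
  then show "card {y \<in> layer v (Suc i). E x y} = b i"
    using b_count[OF assms, of x] \<open>x \<in> layer v i\<close> by (simp add: layer_def)
next
  fix y assume "y \<in> layer v (Suc i)"
  then have "{x \<in> layer v i. E x y} = {u \<in> V. E y u \<and> gdist V E v u + 1 = gdist V E v y}"
    using adj_sym by (auto simp: layer_def)
  then show "card {x \<in> layer v i. E x y} = c (Suc i)"
    using c_count[OF assms, of y] \<open>y \<in> layer v (Suc i)\<close> by (simp add: layer_def)
qed

lemma card_layer_Suc_le:
  assumes "v \<in> V" "1 \<le> i"
  shows "card (layer v (Suc i)) * c 2 \<le> card (layer v i) * b 1"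
proof -
  have "c 2 \<le> c (Suc i)" if nonempty: "layer v (Suc i) \<noteq> {}"
  proof -
    obtain y where "y \<in> V" "gdist V E v y = Suc i"
      using nonempty by (auto simp: layer_def)
    then show ?thesis
      using c2_le_c[OF assms(1), of y] assms(2) by simp
  qed
  then have "card (layer v (Suc i)) * c 2 \<le> card (layer v (Suc i)) * c (Suc i)"
    by (rule card_mult_mono)
  also have "\<dots> = card (layer v i) * b i"
    using card_layer_mult_b[OF assms(1)] by simp
  also have "\<dots> \<le> card (layer v i) * b 1"
    using b_le_b1[OF assms(1)] assms(2) by (intro card_mult_mono) (auto simp: layer_def)
  finally show ?thesis .
qed

lemma card_layer_Suc_bound:
  assumes "v \<in> V" "0 < c 2"
  shows "real (card (layer v (Suc j))) \<le> real (b 0) * (real (b 1) / real (c 2)) ^ j"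
proof (induction j)
  case 0
  show ?case
    using card_layer_1[OF assms(1)] by simp
next
  case (Suc j)
  have "real (card (layer v (Suc (Suc j)))) * real (c 2) \<le> real (card (layer v (Suc j))) * real (b 1)"
    using card_layer_Suc_le[OF assms(1), of "Suc j"] by (simp flip: of_nat_mult)
  then have "real (card (layer v (Suc (Suc j)))) \<le> real (card (layer v (Suc j))) * (real (b 1) / real (c 2))"
    using assms(2) by (simp add: field_simps)
  also have "\<dots> \<le> real (b 0) * (real (b 1) / real (c 2)) ^ j * (real (b 1) / real (c 2))"
    by (rule mult_right_mono[OF Suc.IH]) simp
  finally show ?case
    by (simp add: field_simps)
qed

lemma card_V_bound:
  assumes "0 < c 2"
  shows "real (card V) - 1 \<le> real (b 0) * (\<Sum>j<diameter V E. (real (b 1) / real (c 2)) ^ j)"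
proof -
  obtain v where v: "v \<in> V"
    using V_nonempty by blast
  have "card V = (\<Sum>i<Suc (diameter V E). card (layer v i))"
    using sum.group[OF finite_V finite_atMost, where g = "gdist V E v" and h = "\<lambda>_. 1::nat"] gdist_le_diameter[OF v]
    by (simp add: layer_def lessThan_Suc_atMost image_subset_iff)
  also have "\<dots> = 1 + (\<Sum>j<diameter V E. card (layer v (Suc j)))"
    unfolding sum.lessThan_Suc_shift using layer_0[OF v] by simp
  finally have "real (card V) - 1 = (\<Sum>j<diameter V E. real (card (layer v (Suc j))))"
    by simp
  also have "\<dots> \<le> (\<Sum>j<diameter V E. real (b 0) * (real (b 1) / real (c 2)) ^ j)"
    by (rule sum_mono) (rule card_layer_Suc_bound[OF v assms])
  finally show ?thesis
    by (simp add: sum_distrib_left)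
qed

end

theorem lemma4p4:
  fixes V :: "'a set" and E :: "'a \<Rightarrow> 'a \<Rightarrow> bool" and a b c :: "nat \<Rightarrow> nat"
  assumes drg: "distance_regular V E a b c"
    and diam: "diameter V E \<ge> 2"
  defines "d \<equiv> real (diameter V E)"
    and "n \<equiv> real (card V)"
    and "k \<equiv> real (b 0)"
    and "lam \<equiv> real (a 1)"
    and "mu \<equiv> real (c 2)"
    and "r \<equiv> (real (card V) - 1) / real (b 0)"
  shows "min lam mu < k / (1 + min ((r - 1) / (d - 1)) ((r / d) powr (1 / (d - 1))))
       \<and> mu < k * max ((d - 1) / (r - 1)) ((d / r) powr (1 / (d - 1)))"
proof -
  interpret distance_regular_graph V E a b c
    by (rule distance_regular_graph.intro[OF drg])
  define s where "s = min ((r - 1) / (d - 1)) ((r / d) powr (1 / (d - 1)))"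
  have c2: "0 < c 2" and b1_a1: "b 1 + a 1 < b 0" and card_V: "b 0 + 1 < card V"
    using c2_pos b1_a1_less_b0 b0_less_card_V diam by auto
  have "1 < r"
    using card_V b1_a1 unfolding r_def by (simp add: field_simps)
  moreover have "r \<le> (\<Sum>j<diameter V E. (real (b 1) / mu) ^ j)"
    using card_V_bound[OF c2] b1_a1 unfolding r_def mu_def by (simp add: field_simps)
  ultimately have "s \<le> real (b 1) / mu"
    using min_root_bound_le[OF _ _ diam, of "real (b 1) / mu" r] unfolding s_def d_def mu_def by simp
  moreover have "0 < s"
    using \<open>1 < r\<close> diam unfolding s_def d_def by simp
  moreover have "max ((d - 1) / (r - 1)) ((d / r) powr (1 / (d - 1))) = 1 / s"
    using max_reciprocal_ratios_eq \<open>1 < r\<close> diam unfolding s_def d_def by simp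
  ultimately show ?thesis
    using intersection_number_bounds[of mu lam "real (b 1)" k s] c2 b1_a1
    unfolding s_def k_def lam_def mu_def by simp
qed

end
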